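(* Let $m,n\ge0$ be integers and $\Gamma={\rm SR}(m,n)$. (i) Any two adjacent vertices $u,v$ uniquely determine three cliques $C_1,C_2,C_3$, where $C_i$ is the unique largest clique of type $i$ containing $u$ and $v$, such that $C_i\cap C_j=\{u,v\}$ for distinct $i,j\in\{1,2,3\}$, and $C_1\cup C_2\cup C_3$ contains all common neighbours of $u$ and $v$. (ii) Fix a vertex $u$ and let $U$ be its set of neighbours. For each $i\in\{1,2,3\}$, the maximal cliques of type $i$ containing $u$, with $u$ removed, form a partition of $U$. Each edge of the subgraph induced on $U$ is contained in a unique such clique (among all three types), and hence has a unique type. (iii) $\Gamma$ does not contain an induced subgraph isomorphic to the complete tripartite graph $K_{1,1,4}$.
   Context: $\mathbb{N}=\{0,1,2,\dots\}$; $e_i$ is the $i$-th standard unit vector. ${\rm SR}(m,n)$ has as vertices the vectors in $\mathbb{N}^m$ with coordinate sum $n$, two being adjacent when they differ in precisely two coordinates. Every clique is of (at least) one of three types: type 1: all pairs of distinct vertices in the clique differ exactly in coordinates $j,k$ for one fixed pair $j\ne k$; type 2: the clique is $\{x+ae_i: i\in I\}$ with $1\le a\le n$, $x\in\mathbb{N}^m$ of coordinate sum $n-a$, $I\subseteq\{1,\dots,m\}$; type 3: the clique is $\{x-ae_i:i\in I\}$ with $a\ge1$, $x\in\mathbb{N}^m$ of coordinate sum $n+a$, $I\subseteq\{1,\dots,m\}$, $x_i\ge a$ for $i\in I$. *)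

theory Defs
  imports Main
begin

text \<open>Vertices of SR(m,n): vectors in N^m, represented as functions nat => nat
  supported on {0..<m} (coordinates are indexed 0..m-1), with coordinate sum n.\<close>

definition in_Nm :: "nat \<Rightarrow> (nat \<Rightarrow> nat) \<Rightarrow> bool" where
  "in_Nm m x \<longleftrightarrow> (\<forall>i\<ge>m. x i = 0)"

definition sr_vert :: "nat \<Rightarrow> nat \<Rightarrow> (nat \<Rightarrow> nat) \<Rightarrow> bool" where
  "sr_vert m n x \<longleftrightarrow> in_Nm m x \<and> (\<Sum>i<m. x i) = n"

definition sr_adj :: "nat \<Rightarrow> nat \<Rightarrow> (nat \<Rightarrow> nat) \<Rightarrow> (nat \<Rightarrow> nat) \<Rightarrow> bool" where
  "sr_adj m n x y \<longleftrightarrow> sr_vert m n x \<and> sr_vert m n y \<and> card {i. x i \<noteq> y i} = 2"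

definition sr_clique :: "nat \<Rightarrow> nat \<Rightarrow> (nat \<Rightarrow> nat) set \<Rightarrow> bool" where
  "sr_clique m n C \<longleftrightarrow> (\<forall>x\<in>C. sr_vert m n x) \<and>
     (\<forall>x\<in>C. \<forall>y\<in>C. x \<noteq> y \<longrightarrow> sr_adj m n x y)"

definition add_e :: "(nat \<Rightarrow> nat) \<Rightarrow> nat \<Rightarrow> nat \<Rightarrow> (nat \<Rightarrow> nat)" where
  "add_e x a i = (\<lambda>j. if j = i then x j + a else x j)"

definition sub_e :: "(nat \<Rightarrow> nat) \<Rightarrow> nat \<Rightarrow> nat \<Rightarrow> (nat \<Rightarrow> nat)" where
  "sub_e x a i = (\<lambda>j. if j = i then x j - a else x j)"

definition clique_type1 :: "nat \<Rightarrow> nat \<Rightarrow> (nat \<Rightarrow> nat) set \<Rightarrow> bool" where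
  "clique_type1 m n C \<longleftrightarrow> sr_clique m n C \<and>
     (\<exists>j k. j \<noteq> k \<and> j < m \<and> k < m \<and>
        (\<forall>x\<in>C. \<forall>y\<in>C. x \<noteq> y \<longrightarrow> {i. x i \<noteq> y i} = {j, k}))"

definition clique_type2 :: "nat \<Rightarrow> nat \<Rightarrow> (nat \<Rightarrow> nat) set \<Rightarrow> bool" where
  "clique_type2 m n C \<longleftrightarrow> sr_clique m n C \<and>
     (\<exists>a x I. 1 \<le> a \<and> a \<le> n \<and> in_Nm m x \<and> (\<Sum>i<m. x i) = n - a \<and>
        I \<subseteq> {..<m} \<and> C = (\<lambda>i. add_e x a i) ` I)"

definition clique_type3 :: "nat \<Rightarrow> nat \<Rightarrow> (nat \<Rightarrow> nat) set \<Rightarrow> bool" where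
  "clique_type3 m n C \<longleftrightarrow> sr_clique m n C \<and>
     (\<exists>a x I. 1 \<le> a \<and> in_Nm m x \<and> (\<Sum>i<m. x i) = n + a \<and>
        I \<subseteq> {..<m} \<and> (\<forall>i\<in>I. a \<le> x i) \<and> C = (\<lambda>i. sub_e x a i) ` I)"

definition clique_type :: "nat \<Rightarrow> nat \<Rightarrow> nat \<Rightarrow> (nat \<Rightarrow> nat) set \<Rightarrow> bool" where
  "clique_type m n t C \<longleftrightarrow>
     (t = 1 \<and> clique_type1 m n C) \<or> (t = 2 \<and> clique_type2 m n C) \<or> (t = 3 \<and> clique_type3 m n C)"

definition unique_largest_clique ::
  "nat \<Rightarrow> nat \<Rightarrow> nat \<Rightarrow> (nat \<Rightarrow> nat) \<Rightarrow> (nat \<Rightarrow> nat) \<Rightarrow> (nat \<Rightarrow> nat) set \<Rightarrow> bool" where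
  "unique_largest_clique m n t u v C \<longleftrightarrow> clique_type m n t C \<and> u \<in> C \<and> v \<in> C \<and>
     (\<forall>D. clique_type m n t D \<and> u \<in> D \<and> v \<in> D \<longrightarrow>
        card D \<le> card C \<and> (card D = card C \<longrightarrow> D = C))"

definition maximal_clique_at ::
  "nat \<Rightarrow> nat \<Rightarrow> nat \<Rightarrow> (nat \<Rightarrow> nat) \<Rightarrow> (nat \<Rightarrow> nat) set \<Rightarrow> bool" where
  "maximal_clique_at m n t u C \<longleftrightarrow> clique_type m n t C \<and> u \<in> C \<and>
     (\<forall>D. clique_type m n t D \<and> C \<subseteq> D \<longrightarrow> D = C)"

end

theory Submission
  imports Defs
begin

text \<open>Every edge \<open>u v\<close> of SR(m,n) is obtained by moving \<open>d\<close> units from a coordinate \<open>j\<close> to a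
  coordinate \<open>k\<close>, i.e. \<open>v = u - d e\<^sub>j + d e\<^sub>k\<close>. Through it pass exactly three candidate
  cliques: the line of vertices agreeing with \<open>u\<close> off \<open>{j, k}\<close> (type 1), the set
  \<open>{u - d e\<^sub>j + d e\<^sub>i}\<close> (type 2) and the set \<open>{u + d e\<^sub>k - d e\<^sub>i}\<close> (type 3). Comparing
  coordinates shows that every clique of type \<open>t\<close> containing \<open>u\<close> and \<open>v\<close> lies in the
  \<open>t\<close>-th candidate, that any two candidates meet only in \<open>{u, v}\<close>, and that a common
  neighbour \<open>w\<close> differs from \<open>u\<close> in \<open>j\<close> or \<open>k\<close> and one further coordinate \<open>i\<close>, which
  places it in one of the three. Everything else follows: uniqueness of maximal cliques at
  \<open>u\<close> through a neighbour, and no induced \<open>K\<^sub>1\<^sub>,\<^sub>1\<^sub>,\<^sub>4\<close>, since four pairwise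
  non-adjacent common neighbours of an edge cannot be covered by three cliques.\<close>

lemma add_e_apply [simp]: "add_e x a i l = (if l = i then x l + a else x l)"
  by (simp add: add_e_def)

lemma sub_e_apply [simp]: "sub_e x a i l = (if l = i then x l - a else x l)"
  by (simp add: sub_e_def)

lemma sum_lessThan_remove2:
  assumes "j < (m::nat)" "k < m" "j \<noteq> k"
  shows "(\<Sum>i<m. f i) = f j + f k + (\<Sum>i\<in>{..<m} - {j, k}. f i)"
proof -
  have "(\<Sum>i<m. f i) = f j + (\<Sum>i\<in>{..<m} - {j}. f i)"
    by (rule sum.remove) (use assms in auto)
  also have "(\<Sum>i\<in>{..<m} - {j}. f i) = f k + (\<Sum>i\<in>{..<m} - {j} - {k}. f i)"
    by (rule sum.remove) (use assms in auto)
  finally show ?thesis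
    by (simp add: add.assoc Diff_insert2 [symmetric])
qed

lemma sum_add_e: "i < m \<Longrightarrow> (\<Sum>l<m. add_e x a i l) = (\<Sum>l<m. x l) + a"
  by (simp add: sum.remove [of "{..<m}" i] sum.cong [of "{..<m} - {i}" _ "add_e x a i" x])

lemma sum_sub_e: "i < m \<Longrightarrow> a \<le> x i \<Longrightarrow> (\<Sum>l<m. sub_e x a i l) = (\<Sum>l<m. x l) - a"
  by (simp add: sum.remove [of "{..<m}" i] sum.cong [of "{..<m} - {i}" _ "sub_e x a i" x])

lemma in_Nm_add_e: "in_Nm m x \<Longrightarrow> i < m \<Longrightarrow> in_Nm m (add_e x a i)"
  by (auto simp: in_Nm_def)

lemma in_Nm_sub_e: "in_Nm m x \<Longrightarrow> in_Nm m (sub_e x a i)"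
  by (auto simp: in_Nm_def)

lemma in_Nm_differ_less: "in_Nm m x \<Longrightarrow> in_Nm m y \<Longrightarrow> x i \<noteq> y i \<Longrightarrow> i < m"
  unfolding in_Nm_def by (metis not_le)

lemma sr_vert_le: "sr_vert m n x \<Longrightarrow> x i \<le> n"
  unfolding sr_vert_def in_Nm_def
  by (metis finite_lessThan le0 lessThan_iff member_le_sum not_le)

lemma finite_sr_vert: "finite {x. sr_vert m n x}"
proof (rule finite_subset)
  show "{x. sr_vert m n x} \<subseteq>
      {f. \<forall>i. (i \<in> {..<m} \<longrightarrow> f i \<in> {..n}) \<and> (i \<notin> {..<m} \<longrightarrow> f i = 0)}"
  proof (intro subsetI CollectI allI conjI impI)
    fix x i assume "x \<in> {x. sr_vert m n x}"
    then have "sr_vert m n x" by simp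
    then show "x i \<in> {..n}" "i \<notin> {..<m} \<Longrightarrow> x i = 0"
      using sr_vert_le [of m n x i] by (simp_all add: sr_vert_def in_Nm_def)
  qed
qed (rule finite_set_of_finite_funs; simp)

lemma sr_vert_iff_swap:
  assumes "sr_vert m n u" "j < m" "k < m" "j \<noteq> k" "\<forall>i. i \<noteq> j \<and> i \<noteq> k \<longrightarrow> w i = u i"
  shows "sr_vert m n w \<longleftrightarrow> w j + w k = u j + u k"
proof -
  define R where "R = (\<Sum>i\<in>{..<m} - {j, k}. u i)"
  have "(\<Sum>i\<in>{..<m} - {j, k}. w i) = R"
    unfolding R_def using assms(5) by (intro sum.cong) auto
  then have sum_w: "(\<Sum>i<m. w i) = w j + w k + R"
    using sum_lessThan_remove2 [OF assms(2-4), of w] by simp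
  have sum_u: "u j + u k + R = n"
    using assms(1) sum_lessThan_remove2 [OF assms(2-4), of u] by (simp add: R_def sr_vert_def)
  have "in_Nm m w"
    unfolding in_Nm_def
  proof (intro allI impI)
    fix i assume "m \<le> i"
    then have "i \<noteq> j" "i \<noteq> k" "u i = 0"
      using assms(1-3) by (auto simp: sr_vert_def in_Nm_def)
    then show "w i = 0"
      using assms(5) by simp
  qed
  then have "sr_vert m n w \<longleftrightarrow> w j + w k + R = n"
    by (simp add: sr_vert_def sum_w)
  with sum_u show ?thesis
    by linarith
qed

lemma sr_adj_iff:
  "sr_adj m n x y \<longleftrightarrow>
     sr_vert m n x \<and> sr_vert m n y \<and> (\<exists>p q. p \<noteq> q \<and> {i. x i \<noteq> y i} = {p, q})"
  unfolding sr_adj_def card_2_iff by blast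

lemma sr_adj_irrefl: "\<not> sr_adj m n x x"
  by (simp add: sr_adj_def)

lemma sr_adjE:
  assumes "sr_adj m n x y"
  obtains p q where "p \<noteq> q" "{i. x i \<noteq> y i} = {p, q}" "p < m" "q < m"
    "x p + x q = y p + y q"
proof -
  obtain p q where pq: "p \<noteq> q" "{i. x i \<noteq> y i} = {p, q}"
    using assms unfolding sr_adj_iff by blast
  have vert: "sr_vert m n x" "sr_vert m n y"
    using assms unfolding sr_adj_def by blast+
  have "p \<in> {i. x i \<noteq> y i}" "q \<in> {i. x i \<noteq> y i}"
    using pq(2) by simp_all
  then have less: "p < m" "q < m"
    using vert in_Nm_differ_less [of m x y] unfolding sr_vert_def by blast+
  have agree: "\<forall>i. i \<noteq> p \<and> i \<noteq> q \<longrightarrow> y i = x i"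
  proof (intro allI impI)
    fix i assume "i \<noteq> p \<and> i \<noteq> q"
    then have "i \<notin> {i. x i \<noteq> y i}"
      using pq(2) by simp
    then show "y i = x i" by simp
  qed
  have "x p + x q = y p + y q"
    using sr_vert_iff_swap [OF vert(1) less pq(1) agree] vert(2) by simp
  with pq less show thesis
    by (rule that)
qed

lemma sr_vert_add_e:
  "in_Nm m x \<Longrightarrow> i < m \<Longrightarrow> sr_vert m n (add_e x a i) \<longleftrightarrow> (\<Sum>l<m. x l) + a = n"
  by (simp add: sr_vert_def in_Nm_add_e sum_add_e del: add_e_apply)

lemma sr_vert_sub_e:
  "in_Nm m x \<Longrightarrow> i < m \<Longrightarrow> a \<le> x i \<Longrightarrow>
    sr_vert m n (sub_e x a i) \<longleftrightarrow> (\<Sum>l<m. x l) - a = n"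
  by (simp add: sr_vert_def in_Nm_sub_e sum_sub_e del: sub_e_apply)

lemma sr_adj_add_e:
  assumes "in_Nm m x" "(\<Sum>l<m. x l) + a = n" "0 < a" "i < m" "i' < m" "i \<noteq> i'"
  shows "sr_adj m n (add_e x a i) (add_e x a i')"
proof -
  have "{l. add_e x a i l \<noteq> add_e x a i' l} = {i, i'}"
    using assms(3,6) by auto
  then show ?thesis
    using assms by (simp add: sr_adj_def sr_vert_add_e)
qed

lemma sr_adj_sub_e:
  assumes "in_Nm m x" "(\<Sum>l<m. x l) - a = n" "0 < a" "i < m" "i' < m" "i \<noteq> i'"
    "a \<le> x i" "a \<le> x i'"
  shows "sr_adj m n (sub_e x a i) (sub_e x a i')"
proof -
  have "{l. sub_e x a i l \<noteq> sub_e x a i' l} = {i, i'}"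
    using assms(3,6-8) by auto
  then show ?thesis
    using assms by (simp add: sr_adj_def sr_vert_sub_e)
qed

lemma sr_clique_add_e_image:
  assumes "in_Nm m x" "(\<Sum>l<m. x l) + a = n" "0 < a" "I \<subseteq> {..<m}"
  shows "sr_clique m n ((\<lambda>i. add_e x a i) ` I)"
  unfolding sr_clique_def
proof (intro conjI ballI impI)
  fix y assume "y \<in> (\<lambda>i. add_e x a i) ` I"
  then obtain i where "i \<in> I" "y = add_e x a i" by blast
  with assms show "sr_vert m n y"
    by (auto simp: sr_vert_add_e)
next
  fix y z assume "y \<in> (\<lambda>i. add_e x a i) ` I" "z \<in> (\<lambda>i. add_e x a i) ` I" "y \<noteq> z"
  then obtain i i' where "i \<in> I" "i' \<in> I" "y = add_e x a i" "z = add_e x a i'" "i \<noteq> i'"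
    by blast
  with assms(4) show "sr_adj m n y z"
    using sr_adj_add_e [OF assms(1-3)] by blast
qed

lemma sr_clique_sub_e_image:
  assumes "in_Nm m x" "(\<Sum>l<m. x l) - a = n" "0 < a" "I \<subseteq> {..<m}" "\<forall>i\<in>I. a \<le> x i"
  shows "sr_clique m n ((\<lambda>i. sub_e x a i) ` I)"
  unfolding sr_clique_def
proof (intro conjI ballI impI)
  fix y assume "y \<in> (\<lambda>i. sub_e x a i) ` I"
  then obtain i where "i \<in> I" "y = sub_e x a i" by blast
  with assms show "sr_vert m n y"
    by (auto simp: sr_vert_sub_e)
next
  fix y z assume "y \<in> (\<lambda>i. sub_e x a i) ` I" "z \<in> (\<lambda>i. sub_e x a i) ` I" "y \<noteq> z"
  then obtain i i' where "i \<in> I" "i' \<in> I" "y = sub_e x a i" "z = sub_e x a i'" "i \<noteq> i'"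
    by blast
  with assms(4,5) show "sr_adj m n y z"
    using sr_adj_sub_e [OF assms(1-3)] by blast
qed

lemma clique_type_sr_clique: "clique_type m n t C \<Longrightarrow> sr_clique m n C"
  unfolding clique_type_def clique_type1_def clique_type2_def clique_type3_def by auto

lemma clique_type_index: "clique_type m n t C \<Longrightarrow> t \<in> {1, 2, 3}"
  unfolding clique_type_def by auto

lemma card_le_card_clique_cover:
  assumes "finite F" "S \<subseteq> \<Union>F"
    and clique: "\<And>A x y. A \<in> F \<Longrightarrow> x \<in> A \<Longrightarrow> y \<in> A \<Longrightarrow> x \<noteq> y \<Longrightarrow> R x y"
    and independent: "\<And>x y. x \<in> S \<Longrightarrow> y \<in> S \<Longrightarrow> x \<noteq> y \<Longrightarrow> \<not> R x y"
  shows "card S \<le> card F"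
proof -
  define f where "f x = (SOME A. A \<in> F \<and> x \<in> A)" for x
  have f: "f x \<in> F \<and> x \<in> f x" if "x \<in> S" for x
  proof -
    have "\<exists>A. A \<in> F \<and> x \<in> A"
      using assms(2) that by blast
    then show ?thesis
      unfolding f_def by (rule someI_ex)
  qed
  have "inj_on f S"
  proof (rule inj_onI, rule ccontr)
    fix x y assume "x \<in> S" "y \<in> S" "f x = f y" "x \<noteq> y"
    have "f x \<in> F" "x \<in> f x" "y \<in> f x"
      using f [of x] f [of y] \<open>x \<in> S\<close> \<open>y \<in> S\<close> \<open>f x = f y\<close> by auto
    then have "R x y"
      using clique \<open>x \<noteq> y\<close> by blast
    with \<open>x \<in> S\<close> \<open>y \<in> S\<close> \<open>x \<noteq> y\<close> show False
      using independent by blast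
  qed
  moreover have "f ` S \<subseteq> F"
    using f by blast
  ultimately show ?thesis
    using assms(1) by (rule card_inj_on_le)
qed

locale sr_edge =
  fixes m n :: nat and u v :: "nat \<Rightarrow> nat" and j k d :: nat
  assumes vert_u: "sr_vert m n u"
    and j_less: "j < m" and k_less: "k < m" and j_ne_k: "j \<noteq> k"
    and d_pos: "0 < d" and d_le: "d \<le> u j"
    and v_eq: "v = add_e (sub_e u d j) d k"
begin

lemma v_apply: "v i = (if i = j then u j - d else if i = k then u k + d else u i)"
  using j_ne_k by (simp add: v_eq)

lemma vert_v: "sr_vert m n v"
  using sr_vert_iff_swap [OF vert_u j_less k_less j_ne_k, of v] d_le j_ne_k by (simp add: v_apply)

lemma differ_u_v: "{i. u i \<noteq> v i} = {j, k}"
  using d_pos d_le by (auto simp: v_apply)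

lemma u_ne_v: "u \<noteq> v"
  using differ_u_v by auto

definition line_clique :: "(nat \<Rightarrow> nat) set" where
  "line_clique = {w. sr_vert m n w \<and> (\<forall>i. i \<noteq> j \<and> i \<noteq> k \<longrightarrow> w i = u i)}"

definition plus_base :: "nat \<Rightarrow> nat" where
  "plus_base = sub_e u d j"

definition minus_base :: "nat \<Rightarrow> nat" where
  "minus_base = add_e u d k"

definition plus_clique :: "(nat \<Rightarrow> nat) set" where
  "plus_clique = (\<lambda>i. add_e plus_base d i) ` {..<m}"

definition minus_clique :: "(nat \<Rightarrow> nat) set" where
  "minus_clique = (\<lambda>i. sub_e minus_base d i) ` {i. i < m \<and> d \<le> minus_base i}"

lemma u_eq_plus: "u = add_e plus_base d j"
  using d_le by (auto simp: plus_base_def)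

lemma v_eq_plus: "v = add_e plus_base d k"
  using j_ne_k by (auto simp: plus_base_def v_apply)

lemma u_eq_minus: "u = sub_e minus_base d k"
  by (auto simp: minus_base_def)

lemma v_eq_minus: "v = sub_e minus_base d j"
  using j_ne_k by (auto simp: minus_base_def v_apply)

lemma plus_base_vert: "in_Nm m plus_base" "(\<Sum>l<m. plus_base l) + d = n"
proof -
  show "in_Nm m plus_base"
    using vert_u by (simp add: plus_base_def sr_vert_def in_Nm_sub_e)
  then show "(\<Sum>l<m. plus_base l) + d = n"
    using vert_u sr_vert_add_e [of m plus_base j n d] j_less u_eq_plus by simp
qed

lemma minus_base_vert: "in_Nm m minus_base" "(\<Sum>l<m. minus_base l) = n + d"
proof -
  show "in_Nm m minus_base"
    using vert_u k_less by (simp add: minus_base_def sr_vert_def in_Nm_add_e)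
  show "(\<Sum>l<m. minus_base l) = n + d"
    using vert_u sum_add_e [OF k_less, of u d]
    by (simp add: minus_base_def sr_vert_def del: add_e_apply)
qed

lemma line_clique_differ:
  assumes "x \<in> line_clique" "y \<in> line_clique" "x \<noteq> y"
  shows "{i. x i \<noteq> y i} = {j, k}"
proof -
  have agree: "\<forall>i. i \<noteq> j \<and> i \<noteq> k \<longrightarrow> x i = u i \<and> y i = u i"
    using assms(1,2) by (simp add: line_clique_def)
  have "x j + x k = u j + u k" "y j + y k = u j + u k"
    using assms(1,2) sr_vert_iff_swap [OF vert_u j_less k_less j_ne_k, of x]
      sr_vert_iff_swap [OF vert_u j_less k_less j_ne_k, of y]
    by (simp_all add: line_clique_def)
  then have "x j + x k = y j + y k"
    by simp
  moreover have "x j \<noteq> y j"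
  proof
    assume "x j = y j"
    with \<open>x j + x k = y j + y k\<close> have "x i = y i" for i
      using agree by (cases "i = j \<or> i = k") auto
    with assms(3) show False
      by auto
  qed
  ultimately show ?thesis
    using agree by auto
qed

lemma line_clique_type: "clique_type1 m n line_clique"
proof -
  have "sr_clique m n line_clique"
    unfolding sr_clique_def
  proof (intro conjI ballI impI)
    fix x y assume "x \<in> line_clique" "y \<in> line_clique" "x \<noteq> y"
    then show "sr_adj m n x y"
      using line_clique_differ j_ne_k by (auto simp: sr_adj_iff line_clique_def)
  qed (simp add: line_clique_def)
  then show ?thesis
    unfolding clique_type1_def using line_clique_differ j_ne_k j_less k_less by blast
qed

lemma plus_clique_type: "clique_type2 m n plus_clique"
proof -
  have "d \<le> n"
    using d_le sr_vert_le [OF vert_u] le_trans by blast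
  then show ?thesis
    unfolding clique_type2_def plus_clique_def
    using sr_clique_add_e_image [OF plus_base_vert d_pos] plus_base_vert d_pos
    by (intro conjI exI [of _ d] exI [of _ plus_base] exI [of _ "{..<m}"]) auto
qed

lemma minus_clique_type: "clique_type3 m n minus_clique"
proof -
  have "(\<Sum>l<m. minus_base l) - d = n"
    using minus_base_vert(2) by simp
  then have "sr_clique m n minus_clique"
    unfolding minus_clique_def
    by (rule sr_clique_sub_e_image [OF minus_base_vert(1) _ d_pos]) auto
  then show ?thesis
    unfolding clique_type3_def minus_clique_def using minus_base_vert d_pos
    by (intro conjI exI [of _ d] exI [of _ minus_base] exI [of _ "{i. i < m \<and> d \<le> minus_base i}"])
      auto
qed

lemma u_v_mem_line_clique: "u \<in> line_clique" "v \<in> line_clique"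
  using vert_u vert_v by (auto simp: line_clique_def v_apply)

lemma u_v_mem_plus_clique: "u \<in> plus_clique" "v \<in> plus_clique"
  unfolding plus_clique_def using u_eq_plus v_eq_plus j_less k_less by auto

lemma u_v_mem_minus_clique: "u \<in> minus_clique" "v \<in> minus_clique"
proof -
  have "d \<le> minus_base k" "d \<le> minus_base j"
    using d_le j_ne_k by (simp_all add: minus_base_def)
  then show "u \<in> minus_clique" "v \<in> minus_clique"
    unfolding minus_clique_def using u_eq_minus v_eq_minus j_less k_less by auto
qed

lemma type1_subset_line_clique:
  assumes "clique_type1 m n D" "u \<in> D" "v \<in> D"
  shows "D \<subseteq> line_clique"
proof
  fix w assume "w \<in> D"
  obtain p q where pq: "\<forall>x\<in>D. \<forall>y\<in>D. x \<noteq> y \<longrightarrow> {i. x i \<noteq> y i} = {p, q}"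
    using assms(1) unfolding clique_type1_def by blast
  have jk: "{p, q} = {j, k}"
    using pq [rule_format, OF assms(2,3) u_ne_v] differ_u_v by simp
  have "w i = u i" if "i \<noteq> j" "i \<noteq> k" for i
  proof (cases "u = w")
    case False
    then have "{l. u l \<noteq> w l} = {j, k}"
      using pq [rule_format, OF assms(2) \<open>w \<in> D\<close>] jk by simp
    then have "i \<notin> {l. u l \<noteq> w l}"
      using that by simp
    then show ?thesis
      by simp
  qed simp
  moreover have "sr_vert m n w"
    using assms(1) \<open>w \<in> D\<close> by (auto simp: clique_type1_def sr_clique_def)
  ultimately show "w \<in> line_clique"
    by (simp add: line_clique_def)
qed

lemma type2_subset_plus_clique:
  assumes "clique_type2 m n D" "u \<in> D" "v \<in> D"
  shows "D \<subseteq> plus_clique"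
proof -
  obtain a x I where a: "1 \<le> a" and I: "I \<subseteq> {..<m}" and D: "D = (\<lambda>i. add_e x a i) ` I"
    using assms(1) unfolding clique_type2_def by blast
  obtain i1 where i1: "u = add_e x a i1"
    using assms(2) D by blast
  obtain i2 where i2: "v = add_e x a i2"
    using assms(3) D by blast
  have "i1 \<noteq> i2"
    using i1 i2 u_ne_v by blast
  then have u_i1: "u i1 = x i1 + a" and v_i1: "v i1 = x i1"
    by (simp_all add: i1 i2)
  then have "i1 = j"
    using v_apply [of i1] a by (auto split: if_splits)
  then have "a = d"
    using u_i1 v_i1 v_apply [of j] d_le by simp
  have "x = plus_base"
  proof
    fix l show "x l = plus_base l"
      using fun_cong [OF i1, of l] \<open>i1 = j\<close> \<open>a = d\<close>
      by (cases "l = j") (simp_all add: plus_base_def)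
  qed
  then show ?thesis
    unfolding D plus_clique_def using I \<open>a = d\<close> by auto
qed

lemma type3_subset_minus_clique:
  assumes "clique_type3 m n D" "u \<in> D" "v \<in> D"
  shows "D \<subseteq> minus_clique"
proof -
  obtain a y I where a: "1 \<le> a" and I: "I \<subseteq> {..<m}" "\<forall>i\<in>I. a \<le> y i"
    and D: "D = (\<lambda>i. sub_e y a i) ` I"
    using assms(1) unfolding clique_type3_def by blast
  obtain i1 where "i1 \<in> I" and i1: "u = sub_e y a i1"
    using assms(2) D by blast
  obtain i2 where i2: "v = sub_e y a i2"
    using assms(3) D by blast
  have "i1 \<noteq> i2"
    using i1 i2 u_ne_v by blast
  then have u_i1: "u i1 = y i1 - a" and v_i1: "v i1 = y i1"
    by (simp_all add: i1 i2)
  moreover have "a \<le> y i1"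
    using I(2) \<open>i1 \<in> I\<close> by blast
  ultimately have "i1 = k"
    using v_apply [of i1] a by (auto split: if_splits)
  then have "a = d"
    using u_i1 v_i1 v_apply [of k] \<open>a \<le> y i1\<close> j_ne_k by simp
  have "y = minus_base"
  proof
    fix l show "y l = minus_base l"
      using fun_cong [OF i1, of l] \<open>i1 = k\<close> \<open>a = d\<close> \<open>a \<le> y i1\<close>
      by (cases "l = k") (simp_all add: minus_base_def)
  qed
  then show ?thesis
    unfolding D minus_clique_def using I \<open>a = d\<close> by auto
qed

lemma line_Int_plus_clique: "line_clique \<inter> plus_clique \<subseteq> {u, v}"
proof
  fix w assume w: "w \<in> line_clique \<inter> plus_clique"
  then obtain i where "i < m" and w_eq: "w = add_e plus_base d i"
    unfolding plus_clique_def by blast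
  show "w \<in> {u, v}"
  proof (cases "i = j \<or> i = k")
    case False
    then have "w i = u i + d"
      by (simp add: w_eq plus_base_def)
    moreover have "w i = u i"
      using w False by (simp add: line_clique_def)
    ultimately show ?thesis
      using d_pos by simp
  qed (use w_eq u_eq_plus v_eq_plus in auto)
qed

lemma line_Int_minus_clique: "line_clique \<inter> minus_clique \<subseteq> {u, v}"
proof
  fix w assume w: "w \<in> line_clique \<inter> minus_clique"
  then obtain i where "d \<le> minus_base i" and w_eq: "w = sub_e minus_base d i"
    unfolding minus_clique_def by blast
  show "w \<in> {u, v}"
  proof (cases "i = j \<or> i = k")
    case False
    then have "w i = u i - d" "d \<le> u i"
      using \<open>d \<le> minus_base i\<close> by (simp_all add: w_eq minus_base_def)
    moreover have "w i = u i"
      using w False by (simp add: line_clique_def)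
    ultimately show ?thesis
      using d_pos by simp
  qed (use w_eq u_eq_minus v_eq_minus in auto)
qed

lemma plus_Int_minus_clique: "plus_clique \<inter> minus_clique \<subseteq> {u, v}"
proof
  fix w assume w: "w \<in> plus_clique \<inter> minus_clique"
  then obtain i where w_eq: "w = add_e plus_base d i"
    unfolding plus_clique_def by blast
  obtain l where w_eq': "w = sub_e minus_base d l"
    using w unfolding minus_clique_def by blast
  show "w \<in> {u, v}"
  proof (cases "i = j \<or> i = k")
    case False
    then have "w i = u i + d"
      by (simp add: w_eq plus_base_def)
    moreover have "w i \<le> u i"
      using False by (simp add: w_eq' minus_base_def)
    ultimately show ?thesis
      using d_pos by simp
  qed (use w_eq u_eq_plus v_eq_plus in auto)
qed

lemma mem_plus_clique_if_differ:
  assumes "sr_vert m n w" "i < m" "i \<noteq> j" "\<forall>l. l \<noteq> i \<and> l \<noteq> j \<longrightarrow> w l = u l"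
    and "w j = u j - d"
  shows "w \<in> plus_clique"
proof -
  have "w i + w j = u i + u j"
    using sr_vert_iff_swap [OF vert_u assms(2) j_less assms(3,4)] assms(1) by simp
  then have "w i = u i + d"
    using assms(5) d_le by linarith
  have "w = add_e plus_base d i"
  proof
    fix l show "w l = add_e plus_base d i l"
      using assms(4,5) \<open>w i = u i + d\<close>
      by (cases "l = i"; cases "l = j") (simp_all add: plus_base_def assms(3) not_sym [OF assms(3)])
  qed
  then show ?thesis
    using assms(2) by (auto simp: plus_clique_def)
qed

lemma mem_minus_clique_if_differ:
  assumes "sr_vert m n w" "i < m" "i \<noteq> k" "\<forall>l. l \<noteq> i \<and> l \<noteq> k \<longrightarrow> w l = u l"
    and "w k = u k + d"
  shows "w \<in> minus_clique"
proof -
  have "w i + w k = u i + u k"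
    using sr_vert_iff_swap [OF vert_u assms(2) k_less assms(3,4)] assms(1) by simp
  then have "w i = u i - d" "d \<le> u i"
    using assms(5) by linarith+
  have "w = sub_e minus_base d i"
  proof
    fix l show "w l = sub_e minus_base d i l"
      using assms(4,5) \<open>w i = u i - d\<close>
      by (cases "l = i"; cases "l = k") (simp_all add: minus_base_def assms(3) not_sym [OF assms(3)])
  qed
  moreover have "d \<le> minus_base i"
    using \<open>d \<le> u i\<close> assms(3) by (simp add: minus_base_def)
  ultimately show ?thesis
    using assms(2) by (auto simp: minus_clique_def)
qed

lemma common_neighbour_mem:
  assumes "sr_adj m n u w" "sr_adj m n v w"
  shows "w \<in> line_clique \<union> plus_clique \<union> minus_clique"
proof (cases "w \<in> line_clique")
  case False
  have vert_w: "sr_vert m n w"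
    using assms(1) by (simp add: sr_adj_def)
  obtain p q where pq: "p \<noteq> q" "{l. u l \<noteq> w l} = {p, q}" "p < m" "q < m"
    using assms(1) by (rule sr_adjE)
  have "\<not> {p, q} \<subseteq> {j, k}"
  proof
    assume "{p, q} \<subseteq> {j, k}"
    have "w l = u l" if "l \<noteq> j" "l \<noteq> k" for l
    proof -
      have "l \<notin> {l. u l \<noteq> w l}"
        using pq(2) that \<open>{p, q} \<subseteq> {j, k}\<close> by blast
      then show ?thesis
        by simp
    qed
    with False vert_w show False
      by (simp add: line_clique_def)
  qed
  then consider "p \<noteq> j" "p \<noteq> k" | "q \<noteq> j" "q \<noteq> k"
    by blast
  then obtain i r where ir: "{l. u l \<noteq> w l} = {i, r}" "i \<noteq> j" "i \<noteq> k" "i < m"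
  proof cases
    case 1
    then show thesis
      using that [of p q] pq(2,3) by simp
  next
    case 2
    then show thesis
      using that [of q p] pq(2,4) by (simp add: insert_commute)
  qed
  have differ_at: "w l \<noteq> u l \<longleftrightarrow> l = i \<or> l = r" for l
  proof -
    have "l \<in> {l. u l \<noteq> w l} \<longleftrightarrow> l \<in> {i, r}"
      by (simp only: ir(1))
    then show ?thesis
      by auto
  qed
  have "v i \<noteq> w i"
    using differ_at [of i] v_apply [of i] ir(2,3) by auto
  have "card {l. v l \<noteq> w l} = 2"
    using assms(2) by (simp add: sr_adj_def)
  then have no_three: "\<not> {i, j, k} \<subseteq> {l. v l \<noteq> w l}"
    using card_mono [of "{l. v l \<noteq> w l}" "{i, j, k}"] card_ge_0_finite ir(2,3) j_ne_k
    by fastforce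
  have u_v_j: "u j \<noteq> v j" and u_v_k: "u k \<noteq> v k"
    using differ_u_v by auto
  consider "r = j" | "r = k"
  proof (rule ccontr)
    assume "\<not> thesis"
    then have "r \<noteq> j" "r \<noteq> k"
      using that by blast+
    then have "w j = u j" "w k = u k"
      using differ_at [of j] differ_at [of k] ir(2,3) by auto
    with no_three \<open>v i \<noteq> w i\<close> u_v_j u_v_k show False
      by auto
  qed
  then show ?thesis
  proof cases
    case 1
    then have "w k = u k"
      using differ_at [of k] ir(3) j_ne_k by auto
    then have "w j = v j"
      using no_three \<open>v i \<noteq> w i\<close> u_v_k by auto
    moreover have "\<forall>l. l \<noteq> i \<and> l \<noteq> j \<longrightarrow> w l = u l"
      using differ_at 1 by blast
    ultimately have "w \<in> plus_clique"
      using mem_plus_clique_if_differ [OF vert_w ir(4,2)] v_apply [of j] by simp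
    then show ?thesis
      by blast
  next
    case 2
    then have "w j = u j"
      using differ_at [of j] ir(2) j_ne_k by auto
    then have "w k = v k"
      using no_three \<open>v i \<noteq> w i\<close> u_v_j by auto
    moreover have "\<forall>l. l \<noteq> i \<and> l \<noteq> k \<longrightarrow> w l = u l"
      using differ_at 2 by blast
    ultimately have "w \<in> minus_clique"
      using mem_minus_clique_if_differ [OF vert_w ir(4,3)] v_apply [of k] j_ne_k by simp
    then show ?thesis
      by blast
  qed
qed simp

definition edge_clique :: "nat \<Rightarrow> (nat \<Rightarrow> nat) set" where
  "edge_clique t = (if t = 1 then line_clique else if t = 2 then plus_clique else minus_clique)"

lemma edge_clique_type: "t \<in> {1, 2, 3} \<Longrightarrow> clique_type m n t (edge_clique t)"
  using line_clique_type plus_clique_type minus_clique_type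
  by (auto simp: clique_type_def edge_clique_def)

lemma u_v_mem_edge_clique: "u \<in> edge_clique t" "v \<in> edge_clique t"
  using u_v_mem_line_clique u_v_mem_plus_clique u_v_mem_minus_clique
  by (simp_all add: edge_clique_def)

lemma finite_edge_clique: "finite (edge_clique t)"
proof -
  have "finite line_clique"
    using finite_sr_vert [of m n] by (rule finite_subset [rotated]) (auto simp: line_clique_def)
  then show ?thesis
    by (simp add: edge_clique_def plus_clique_def minus_clique_def)
qed

lemma subset_edge_clique:
  assumes "clique_type m n t D" "u \<in> D" "v \<in> D"
  shows "D \<subseteq> edge_clique t"
  using assms(1) type1_subset_line_clique [OF _ assms(2,3)]
    type2_subset_plus_clique [OF _ assms(2,3)] type3_subset_minus_clique [OF _ assms(2,3)]
  unfolding clique_type_def edge_clique_def by auto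

lemma edge_clique_Int:
  assumes "s \<in> {1, 2, 3}" "t \<in> {1, 2, 3}" "s \<noteq> t"
  shows "edge_clique s \<inter> edge_clique t = {u, v}"
proof
  show "edge_clique s \<inter> edge_clique t \<subseteq> {u, v}"
    using assms line_Int_plus_clique line_Int_minus_clique plus_Int_minus_clique
    by (auto simp: edge_clique_def)
qed (simp add: u_v_mem_edge_clique)

lemma common_neighbour_mem_edge_clique:
  "sr_adj m n u w \<Longrightarrow> sr_adj m n v w \<Longrightarrow> w \<in> edge_clique 1 \<union> edge_clique 2 \<union> edge_clique 3"
  using common_neighbour_mem by (simp add: edge_clique_def)

lemma unique_largest_edge_clique:
  "t \<in> {1, 2, 3} \<Longrightarrow> unique_largest_clique m n t u v (edge_clique t)"
  unfolding unique_largest_clique_def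
  using edge_clique_type u_v_mem_edge_clique subset_edge_clique finite_edge_clique
  by (meson card_mono card_subset_eq)

lemma maximal_clique_at_edge_clique:
  "t \<in> {1, 2, 3} \<Longrightarrow> maximal_clique_at m n t u (edge_clique t)"
  unfolding maximal_clique_at_def
  using edge_clique_type u_v_mem_edge_clique subset_edge_clique by (meson subset_antisym subsetD)

lemma maximal_clique_at_eq_edge_clique:
  assumes "maximal_clique_at m n t u C" "v \<in> C"
  shows "C = edge_clique t"
proof -
  have C: "clique_type m n t C" "u \<in> C"
    using assms(1) by (simp_all add: maximal_clique_at_def)
  have "C \<subseteq> edge_clique t"
    using subset_edge_clique [OF C assms(2)] .
  moreover have "clique_type m n t (edge_clique t)"
    using edge_clique_type [OF clique_type_index [OF C(1)]] .
  ultimately show ?thesis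
    using assms(1) unfolding maximal_clique_at_def by blast
qed

lemma maximal_clique_at_common_neighbour:
  assumes "sr_adj m n u w" "sr_adj m n v w"
  obtains t where "t \<in> {1, 2, 3}"
    "\<And>s C. maximal_clique_at m n s u C \<and> v \<in> C \<and> w \<in> C \<longleftrightarrow> s = t \<and> C = edge_clique t"
proof -
  obtain t where t: "t \<in> {1, 2, 3}" "w \<in> edge_clique t"
    using common_neighbour_mem_edge_clique [OF assms] by blast
  have "w \<noteq> u" "w \<noteq> v"
    using assms sr_adj_irrefl [of m n w] by auto
  have unique: "s = t \<and> C = edge_clique t"
    if "maximal_clique_at m n s u C" "v \<in> C" "w \<in> C" for s C
  proof -
    have "C = edge_clique s"
      using maximal_clique_at_eq_edge_clique that(1,2) .
    moreover have "clique_type m n s C"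
      using that(1) by (simp add: maximal_clique_at_def)
    then have "s \<in> {1, 2, 3}"
      by (rule clique_type_index)
    moreover have "s = t"
    proof (rule ccontr)
      assume "s \<noteq> t"
      then have "w \<in> {u, v}"
        using edge_clique_Int [of s t] calculation t that(3) by blast
      with \<open>w \<noteq> u\<close> \<open>w \<noteq> v\<close> show False
        by simp
    qed
    ultimately show ?thesis
      by simp
  qed
  show thesis
  proof (rule that [OF t(1)])
    fix s C
    show "maximal_clique_at m n s u C \<and> v \<in> C \<and> w \<in> C \<longleftrightarrow> s = t \<and> C = edge_clique t"
      using unique [of s C] maximal_clique_at_edge_clique [OF t(1)] u_v_mem_edge_clique t(2)
      by blast
  qed
qed

end

lemma sr_edge_if_differ:
  assumes "sr_vert m n u" "p \<noteq> q" "p < m" "q < m" "{i. u i \<noteq> v i} = {p, q}"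
    and "u p + u q = v p + v q" "v p < u p"
  shows "sr_edge m n u v p q (u p - v p)"
proof
  show "v = add_e (sub_e u (u p - v p) p) (u p - v p) q"
  proof
    fix l
    consider "l = p" | "l = q" | "l \<noteq> p" "l \<noteq> q"
      by blast
    then show "v l = add_e (sub_e u (u p - v p) p) (u p - v p) q l"
    proof cases
      case 3
      then have "l \<notin> {i. u i \<noteq> v i}"
        using assms(5) by simp
      with 3 show ?thesis
        by simp
    qed (use assms(2,6,7) in simp_all)
  qed
qed (use assms in simp_all)

lemma sr_adj_obtain_sr_edge:
  assumes "sr_adj m n u v"
  obtains j k d where "sr_edge m n u v j k d"
proof -
  obtain p q where pq: "p \<noteq> q" "{i. u i \<noteq> v i} = {p, q}" "p < m" "q < m"
    "u p + u q = v p + v q"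
    using assms by (rule sr_adjE)
  have vert_u: "sr_vert m n u"
    using assms by (simp add: sr_adj_def)
  have "u p \<noteq> v p"
    using pq(2) by auto
  show thesis
  proof (cases "v p < u p")
    case True
    then show thesis
      using sr_edge_if_differ [OF vert_u pq(1,3,4,2,5)] that by blast
  next
    case False
    then have "v q < u q"
      using pq(5) \<open>u p \<noteq> v p\<close> by linarith
    moreover have "{i. u i \<noteq> v i} = {q, p}" "u q + u p = v q + v p"
      using pq(2,5) by auto
    ultimately show thesis
      using sr_edge_if_differ [OF vert_u pq(1) [symmetric] pq(4,3)] that by blast
  qed
qed

lemma sr_edge_cliques:
  assumes "sr_adj m n u v"
  shows "\<exists>C :: nat \<Rightarrow> (nat \<Rightarrow> nat) set.
    (\<forall>t\<in>{1,2,3}. unique_largest_clique m n t u v (C t)) \<and>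
    (\<forall>s\<in>{1,2,3}. \<forall>t\<in>{1,2,3}. s \<noteq> t \<longrightarrow> C s \<inter> C t = {u, v}) \<and>
    (\<forall>w. sr_adj m n u w \<and> sr_adj m n v w \<longrightarrow> w \<in> C 1 \<union> C 2 \<union> C 3)"
proof -
  obtain j k d where "sr_edge m n u v j k d"
    using assms by (rule sr_adj_obtain_sr_edge)
  then interpret sr_edge m n u v j k d .
  show ?thesis
    using unique_largest_edge_clique edge_clique_Int common_neighbour_mem_edge_clique
    by blast
qed

lemma maximal_clique_at_subset_neighbours:
  assumes "maximal_clique_at m n t u C"
  shows "C - {u} \<subseteq> {w. sr_adj m n u w}"
proof -
  have "sr_clique m n C" "u \<in> C"
    using assms clique_type_sr_clique by (auto simp: maximal_clique_at_def)
  then show ?thesis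
    by (auto simp: sr_clique_def)
qed

lemma ex1_maximal_clique_at_neighbour:
  assumes "t \<in> {1, 2, 3}" "sr_adj m n u w"
  shows "\<exists>!C. maximal_clique_at m n t u C \<and> w \<in> C - {u}"
proof -
  obtain j k d where "sr_edge m n u w j k d"
    using assms(2) by (rule sr_adj_obtain_sr_edge)
  then interpret sr_edge m n u w j k d .
  show ?thesis
    using maximal_clique_at_edge_clique [OF assms(1)] u_v_mem_edge_clique u_ne_v
      maximal_clique_at_eq_edge_clique by blast
qed

lemma ex1_maximal_clique_at_edge:
  assumes "sr_adj m n u w1" "sr_adj m n u w2" "sr_adj m n w1 w2"
  shows "\<exists>!C. (\<exists>t\<in>{1,2,3}. maximal_clique_at m n t u C) \<and> w1 \<in> C \<and> w2 \<in> C"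
proof -
  obtain j k d where "sr_edge m n u w1 j k d"
    using assms(1) by (rule sr_adj_obtain_sr_edge)
  then interpret sr_edge m n u w1 j k d .
  show ?thesis
  proof (rule maximal_clique_at_common_neighbour [OF assms(2,3)])
    fix t assume t: "t \<in> {1, 2, 3}"
      and iff: "\<And>s C. maximal_clique_at m n s u C \<and> w1 \<in> C \<and> w2 \<in> C \<longleftrightarrow> s = t \<and> C = edge_clique t"
    show ?thesis
    proof (rule ex1I [of _ "edge_clique t"])
      show "(\<exists>s\<in>{1,2,3}. maximal_clique_at m n s u (edge_clique t)) \<and>
          w1 \<in> edge_clique t \<and> w2 \<in> edge_clique t"
        using iff [of t "edge_clique t"] t by blast
    next
      fix C assume "(\<exists>s\<in>{1,2,3}. maximal_clique_at m n s u C) \<and> w1 \<in> C \<and> w2 \<in> C"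
      then show "C = edge_clique t"
        using iff by blast
    qed
  qed
qed

lemma ex1_clique_type_at_edge:
  assumes "sr_adj m n u w1" "sr_adj m n u w2" "sr_adj m n w1 w2"
  shows "\<exists>!t. t \<in> {1,2,3} \<and> (\<exists>C. maximal_clique_at m n t u C \<and> w1 \<in> C \<and> w2 \<in> C)"
proof -
  obtain j k d where "sr_edge m n u w1 j k d"
    using assms(1) by (rule sr_adj_obtain_sr_edge)
  then interpret sr_edge m n u w1 j k d .
  show ?thesis
  proof (rule maximal_clique_at_common_neighbour [OF assms(2,3)])
    fix t assume t: "t \<in> {1, 2, 3}"
      and iff: "\<And>s C. maximal_clique_at m n s u C \<and> w1 \<in> C \<and> w2 \<in> C \<longleftrightarrow> s = t \<and> C = edge_clique t"
    show ?thesis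
    proof (rule ex1I [of _ t])
      show "t \<in> {1,2,3} \<and> (\<exists>C. maximal_clique_at m n t u C \<and> w1 \<in> C \<and> w2 \<in> C)"
        using iff [of t "edge_clique t"] t by blast
    next
      fix s assume "s \<in> {1,2,3} \<and> (\<exists>C. maximal_clique_at m n s u C \<and> w1 \<in> C \<and> w2 \<in> C)"
      then show "s = t"
        using iff by blast
    qed
  qed
qed

lemma no_induced_K114:
  assumes "sr_adj m n a b"
    and common: "\<forall>c\<in>{c1,c2,c3,c4}. sr_adj m n a c \<and> sr_adj m n b c"
    and distinct: "c1 \<noteq> c2" "c1 \<noteq> c3" "c1 \<noteq> c4" "c2 \<noteq> c3" "c2 \<noteq> c4" "c3 \<noteq> c4"
    and independent: "\<forall>c\<in>{c1,c2,c3,c4}. \<forall>d\<in>{c1,c2,c3,c4}. \<not> sr_adj m n c d"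
  shows False
proof -
  obtain j k d where "sr_edge m n a b j k d"
    using assms(1) by (rule sr_adj_obtain_sr_edge)
  then interpret sr_edge m n a b j k d .
  have "card {c1, c2, c3, c4} \<le> card (edge_clique ` {1, 2, 3})"
  proof (rule card_le_card_clique_cover [where R = "sr_adj m n"])
    show "{c1, c2, c3, c4} \<subseteq> \<Union> (edge_clique ` {1, 2, 3})"
    proof
      fix c assume "c \<in> {c1, c2, c3, c4}"
      then have "sr_adj m n a c" "sr_adj m n b c"
        using common by blast+
      then have "c \<in> edge_clique 1 \<union> edge_clique 2 \<union> edge_clique 3"
        by (rule common_neighbour_mem_edge_clique)
      then show "c \<in> \<Union> (edge_clique ` {1, 2, 3})"
        by simp
    qed
    show "sr_adj m n x y"
      if A: "A \<in> edge_clique ` {1, 2, 3}" and xy: "x \<in> A" "y \<in> A" "x \<noteq> y" for A x y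
    proof -
      obtain t where "A = edge_clique t" "t \<in> {1, 2, 3}"
        using A by (rule imageE)
      then have "sr_clique m n A"
        using clique_type_sr_clique [OF edge_clique_type] by simp
      with xy show ?thesis
        by (simp add: sr_clique_def)
    qed
  qed (use independent in auto)
  also have "\<dots> \<le> 3"
    using card_image_le [of "{1, 2, 3 :: nat}" edge_clique] by simp
  finally show False
    using distinct by simp
qed

theorem lemma11:
  fixes m n :: nat
  shows
  "(\<forall>u v. sr_adj m n u v \<longrightarrow>
      (\<exists>C :: nat \<Rightarrow> (nat \<Rightarrow> nat) set.
         (\<forall>t\<in>{1,2,3}. unique_largest_clique m n t u v (C t)) \<and>
         (\<forall>s\<in>{1,2,3}. \<forall>t\<in>{1,2,3}. s \<noteq> t \<longrightarrow> C s \<inter> C t = {u, v}) \<and>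
         (\<forall>w. sr_adj m n u w \<and> sr_adj m n v w \<longrightarrow> w \<in> C 1 \<union> C 2 \<union> C 3)))
   \<and>
   (\<forall>u. sr_vert m n u \<longrightarrow>
      (\<forall>t\<in>{1,2,3}.
         (\<forall>C. maximal_clique_at m n t u C \<longrightarrow> C - {u} \<subseteq> {w. sr_adj m n u w}) \<and>
         (\<forall>w. sr_adj m n u w \<longrightarrow> (\<exists>!C. maximal_clique_at m n t u C \<and> w \<in> C - {u}))) \<and>
      (\<forall>w1 w2. sr_adj m n u w1 \<and> sr_adj m n u w2 \<and> sr_adj m n w1 w2 \<longrightarrow>
         (\<exists>!C. (\<exists>t\<in>{1,2,3}. maximal_clique_at m n t u C) \<and> w1 \<in> C \<and> w2 \<in> C) \<and>
         (\<exists>!t. t \<in> {1,2,3} \<and> (\<exists>C. maximal_clique_at m n t u C \<and> w1 \<in> C \<and> w2 \<in> C))))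
   \<and>
   \<not> (\<exists>a b c1 c2 c3 c4.
        sr_adj m n a b \<and>
        (\<forall>c\<in>{c1,c2,c3,c4}. sr_adj m n a c \<and> sr_adj m n b c) \<and>
        c1 \<noteq> c2 \<and> c1 \<noteq> c3 \<and> c1 \<noteq> c4 \<and> c2 \<noteq> c3 \<and> c2 \<noteq> c4 \<and> c3 \<noteq> c4 \<and>
        (\<forall>c\<in>{c1,c2,c3,c4}. \<forall>d\<in>{c1,c2,c3,c4}. \<not> sr_adj m n c d))"
  apply (intro conjI allI impI ballI notI)
  subgoal by (rule sr_edge_cliques)
  subgoal by (rule maximal_clique_at_subset_neighbours)
  subgoal by (rule ex1_maximal_clique_at_neighbour)
  subgoal by (elim conjE) (rule ex1_maximal_clique_at_edge)
  subgoal by (elim conjE) (rule ex1_clique_type_at_edge)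
  subgoal by (elim exE conjE) (rule no_induced_K114)
  done

end
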